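(* Let $\hat q,\hat p$ be $n\times n$ parametric matrices and $M$ an $n\times n$ $(\hat q,\hat p)$-Manin matrix over $\mathfrak R$. Let $0\le r\le n$ and let $I=(i_1,\dots,i_r)$ and $K=(k_1,\dots,k_{n-r})$ be multi-indices, each with distinct entries from $\{1,\dots,n\}$. Then $$\varepsilon(\hat p,I\oplus K)\,\mathrm{cdet}_{\hat q}(M)=\sum_{J}\varepsilon(\hat q,J\oplus J^c)\,\mathrm{cdet}_{\hat q}(M_{JI})\,\mathrm{cdet}_{\hat q}(M_{J^c,K}),$$ where the sum is over all increasing multi-indices $J=(j_1<\dots<j_r)$ with entries in $\{1,\dots,n\}$, and $J^c$ is the increasing multi-index formed by the elements of $\{1,\dots,n\}\setminus J$.
   Context: $\mathfrak R$ is an associative unital algebra over $\mathbb C$. A parametric $n\times n$ matrix is a matrix $\hat q=(q_{ij})$ of nonzero complex numbers with $q_{ij}q_{ji}=1$, $q_{ii}=1$. An $n\times m$ matrix $M$ over $\mathfrak R$ is a $(\hat q,\hat p)$-Manin matrix ($\hat q$ $n\times n$, $\hat p$ $m\times m$ parametric) if $M_{ik}M_{jk}=q_{ji}M_{jk}M_{ik}$ for $i<j$ and all $k$, and $M_{ik}M_{jl}-q_{ji}p_{kl}M_{jl}M_{ik}+p_{kl}M_{il}M_{jk}-q_{ji}M_{jk}M_{il}=0$ for $i<j$, $k<l$. For multi-indices $I=(i_1,\dots,i_r)$, $K=(k_1,\dots,k_s)$, $I\oplus K=(i_1,\dots,i_r,k_1,\dots,k_s)$. For a multi-index $I$, $\varepsilon(\hat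 q,I)=0$ if two entries coincide, and otherwise $\varepsilon(\hat q,I)=\prod_{s<t,\ i_s>i_t}(-q_{i_si_t})$. For an increasing $I=(i_1<\dots<i_r)$ and $\sigma\in S_r$, $\varepsilon(\hat q,I,\sigma)=\prod_{s<t,\ \sigma(s)>\sigma(t)}(-q_{i_{\sigma(s)}i_{\sigma(t)}})$. For increasing $I=(i_1<\dots<i_r)$ and any multi-index $J=(j_1,\dots,j_r)$, $\mathrm{cdet}_{\hat q}(M_{IJ})=\sum_{\sigma\in S_r}\varepsilon(\hat q,I,\sigma)M_{i_{\sigma(1)},j_1}\cdots M_{i_{\sigma(r)},j_r}$; $\mathrm{cdet}_{\hat q}(M)$ is the case $I=J=(1,\dots,n)$. *)

theory Defs
  imports Complex_Main "HOL-Combinatorics.Permutations"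
begin

text \<open>An associative unital algebra over the complex numbers: a ring with unit together
  with a unital ring homomorphism from the complex numbers into its centre.\<close>
class complex_algebra_1 = ring_1 +
  fixes of_cplx :: "complex \<Rightarrow> 'a"
  assumes of_cplx_one: "of_cplx 1 = 1"
    and of_cplx_add: "of_cplx (a + b) = of_cplx a + of_cplx b"
    and of_cplx_mult: "of_cplx (a * b) = of_cplx a * of_cplx b"
    and of_cplx_central: "of_cplx a * x = x * of_cplx a"

text \<open>Indices run over 1..n. Matrices are functions of two natural-number indices.\<close>

definition param_matrix :: "nat \<Rightarrow> (nat \<Rightarrow> nat \<Rightarrow> complex) \<Rightarrow> bool" where
  "param_matrix n q \<longleftrightarrow>
     (\<forall>i\<in>{1..n}. \<forall>j\<in>{1..n}. q i j \<noteq> 0 \<and> q i j * q j i = 1) \<and> (\<forall>i\<in>{1..n}. q i i = 1)"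

definition manin ::
  "nat \<Rightarrow> nat \<Rightarrow> (nat \<Rightarrow> nat \<Rightarrow> complex) \<Rightarrow> (nat \<Rightarrow> nat \<Rightarrow> complex)
     \<Rightarrow> (nat \<Rightarrow> nat \<Rightarrow> 'a::complex_algebra_1) \<Rightarrow> bool" where
  "manin n m q p M \<longleftrightarrow>
     (\<forall>i j k. 1 \<le> i \<and> i < j \<and> j \<le> n \<and> 1 \<le> k \<and> k \<le> m \<longrightarrow>
        M i k * M j k = of_cplx (q j i) * (M j k * M i k)) \<and>
     (\<forall>i j k l. 1 \<le> i \<and> i < j \<and> j \<le> n \<and> 1 \<le> k \<and> k < l \<and> l \<le> m \<longrightarrow>
        M i k * M j l - of_cplx (q j i * p k l) * (M j l * M i k)
          + of_cplx (p k l) * (M i l * M j k) - of_cplx (q j i) * (M j k * M i l) = 0)"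

text \<open>\<open>\<epsilon>(q,I)\<close> for a multi-index (list) \<open>I\<close>; positions are 0-based list positions.\<close>
definition eps :: "(nat \<Rightarrow> nat \<Rightarrow> complex) \<Rightarrow> nat list \<Rightarrow> complex" where
  "eps q I = (if distinct I then
      (\<Prod>(s,t)\<in>{(s,t). s < t \<and> t < length I \<and> I!s > I!t}. - q (I!s) (I!t))
    else 0)"

text \<open>\<open>\<epsilon>(q,I,\<sigma>)\<close>, \<open>\<sigma>\<close> a permutation of the positions \<open>{0..<r}\<close>.\<close>
definition eps_perm :: "(nat \<Rightarrow> nat \<Rightarrow> complex) \<Rightarrow> nat list \<Rightarrow> (nat \<Rightarrow> nat) \<Rightarrow> complex" where
  "eps_perm q I \<sigma> =
     (\<Prod>(s,t)\<in>{(s,t). s < t \<and> t < length I \<and> \<sigma> s > \<sigma> t}. - q (I!(\<sigma> s)) (I!(\<sigma> t)))"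

text \<open>Column determinant of the submatrix \<open>M_{IJ}\<close> (rows \<open>I\<close> increasing, columns \<open>J\<close>);
  the product is taken in the given (left-to-right) order.\<close>
definition cdet_sub :: "(nat \<Rightarrow> nat \<Rightarrow> complex) \<Rightarrow> nat list \<Rightarrow> nat list
     \<Rightarrow> (nat \<Rightarrow> nat \<Rightarrow> 'a::complex_algebra_1) \<Rightarrow> 'a" where
  "cdet_sub q I J M = (\<Sum>\<sigma> | \<sigma> permutes {..<length I}.
      of_cplx (eps_perm q I \<sigma>) * prod_list (map (\<lambda>s. M (I!(\<sigma> s)) (J!s)) [0..<length J]))"

definition cdet :: "nat \<Rightarrow> (nat \<Rightarrow> nat \<Rightarrow> complex) \<Rightarrow> (nat \<Rightarrow> nat \<Rightarrow> 'a::complex_algebra_1) \<Rightarrow> 'a" where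
  "cdet n q M = cdet_sub q [1..<n+1] [1..<n+1] M"

definition incr_idx :: "nat \<Rightarrow> nat \<Rightarrow> nat list set" where
  "incr_idx n r = {J. sorted_wrt (<) J \<and> set J \<subseteq> {1..n} \<and> length J = r}"

definition compl_idx :: "nat \<Rightarrow> nat list \<Rightarrow> nat list" where
  "compl_idx n J = filter (\<lambda>x. x \<notin> set J) [1..<n+1]"

end

theory Submission
  imports Defs "HOL-Combinatorics.Multiset_Permutations"
begin

text \<open>
  Both sides are column determinants of \<open>M\<close> with row set \<open>{1..n}\<close> and column list \<open>I @ K\<close>,
  where the rows are summed over all their orderings \<open>R\<close> with weight \<open>\<epsilon>(q,R)\<close>.

  Splitting every ordering into its first \<open>r\<close> and its last \<open>n - r\<close> entries, and factoring
  \<open>\<epsilon>(q, R\<^sub>1 @ R\<^sub>2)\<close> as \<open>\<epsilon>(q,R\<^sub>1) \<epsilon>(q,R\<^sub>2)\<close> times the weight of the inversions between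
  the two row sets, which is \<open>\<epsilon>(q, J @ J\<^sup>c)\<close>, gives the right-hand side; this step uses no
  relation on \<open>M\<close>.

  For the left-hand side, the terms of \<open>R\<close> and of \<open>R\<close> with two adjacent rows \<open>a < b\<close>
  exchanged add up to a multiple of the \<open>q\<close>-minor \<open>M\<^sub>a\<^sub>k M\<^sub>b\<^sub>l - q\<^sub>b\<^sub>a M\<^sub>b\<^sub>k M\<^sub>a\<^sub>l\<close>.
  The Manin relations say exactly that this minor vanishes for \<open>k = l\<close> and changes by
  \<open>-p\<^sub>k\<^sub>l\<close> under \<open>k \<leftrightarrow> l\<close>. Hence a repeated column kills the determinant, and exchanging
  adjacent columns multiplies it by \<open>-p\<^sub>k\<^sub>l\<close>; insertion-sorting \<open>I @ K\<close> then produces the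
  factor \<open>\<epsilon>(p, I @ K)\<close>. Only \<open>p\<close> needs to be parametric.
\<close>

declare of_cplx_one [simp]

lemma of_cplx_0 [simp]: "of_cplx 0 = 0"
  using of_cplx_add[of 0 0] by simp

lemma of_cplx_minus [simp]: "of_cplx (- a) = - of_cplx a"
  using of_cplx_add[of a "- a"] by (simp add: eq_neg_iff_add_eq_0 add.commute)

lemma mult_of_cplx_left_commute: "x * (of_cplx a * y) = of_cplx a * (x * y)"
  by (metis mult.assoc of_cplx_central)

lemma of_cplx_pair_combine:
  "of_cplx e * (P * (x1 * (x2 * Q))) + of_cplx (- c * e) * (P * (y1 * (y2 * Q))) =
    of_cplx e * (P * ((x1 * x2 - of_cplx c * (y1 * y2)) * Q))"
proof -
  have "P * ((x1 * x2 - of_cplx c * (y1 * y2)) * Q) = P * (x1 * (x2 * Q)) - of_cplx c * (P * (y1 * (y2 * Q)))"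
    by (simp add: algebra_simps mult_of_cplx_left_commute)
  moreover have "of_cplx (- c * e) * Z = of_cplx e * (of_cplx (- c) * Z)" for Z :: 'a
    by (simp only: mult.commute[of "- c"] of_cplx_mult mult.assoc)
  ultimately show ?thesis
    by (simp add: algebra_simps)
qed

lemma of_cplx_mult_mult:
  "of_cplx c * (of_cplx e1 * x) * (of_cplx e2 * y) = of_cplx (c * e1 * e2) * (x * y)"
  by (simp only: mult.assoc mult_of_cplx_left_commute[of x] of_cplx_mult)

section \<open>Inversion weights\<close>

definition ordered_pairs :: "'a list \<Rightarrow> ('a \<times> 'a) set" where
  "ordered_pairs R = {(R!s, R!t) | s t. s < t \<and> t < length R}"

lemma ordered_pairs_Nil [simp]: "ordered_pairs [] = {}"
  by (simp add: ordered_pairs_def)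

lemma ordered_pairs_Cons [simp]: "ordered_pairs (x # R) = {x} \<times> set R \<union> ordered_pairs R"
proof (intro equalityI subsetI)
  fix u assume "u \<in> ordered_pairs (x # R)"
  then obtain s t where u: "u = ((x#R)!s, (x#R)!t)" "s < t" "t < Suc (length R)"
    unfolding ordered_pairs_def by auto
  then obtain t' where t': "t = Suc t'" by (cases t) auto
  show "u \<in> {x} \<times> set R \<union> ordered_pairs R"
  proof (cases s)
    case 0
    then show ?thesis using u t' by auto
  next
    case (Suc s')
    then show ?thesis using u t' unfolding ordered_pairs_def by auto
  qed
next
  fix u assume "u \<in> {x} \<times> set R \<union> ordered_pairs R"
  then show "u \<in> ordered_pairs (x # R)"
  proof
    assume "u \<in> {x} \<times> set R"
    then obtain t where "u = ((x#R)!0, (x#R)!Suc t)" "t < length R"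
      by (auto simp: in_set_conv_nth)
    then show ?thesis unfolding ordered_pairs_def by fastforce
  next
    assume "u \<in> ordered_pairs R"
    then obtain s t where "u = ((x#R)!Suc s, (x#R)!Suc t)" "s < t" "t < length R"
      unfolding ordered_pairs_def by auto
    then show ?thesis unfolding ordered_pairs_def by fastforce
  qed
qed

lemma ordered_pairs_append:
  "ordered_pairs (A @ B) = ordered_pairs A \<union> ordered_pairs B \<union> set A \<times> set B"
  by (induction A) auto

lemma ordered_pairs_subset: "ordered_pairs R \<subseteq> set R \<times> set R"
  by (induction R) auto

lemma finite_ordered_pairs [simp]: "finite (ordered_pairs R)"
  using ordered_pairs_subset by (rule finite_subset) simp

definition inversion_weight :: "(nat \<Rightarrow> nat \<Rightarrow> complex) \<Rightarrow> (nat \<times> nat) set \<Rightarrow> complex" where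
  "inversion_weight q P = (\<Prod>(x,y)\<in>P. if y < x then - q x y else 1)"

lemma inversion_weight_eq_1: "\<forall>(x,y)\<in>P. x \<le> y \<Longrightarrow> inversion_weight q P = 1"
  unfolding inversion_weight_def by (rule prod.neutral) auto

lemma inversion_weight_insert:
  "finite P \<Longrightarrow> (x,y) \<notin> P \<Longrightarrow>
    inversion_weight q (insert (x,y) P) = (if y < x then - q x y else 1) * inversion_weight q P"
  unfolding inversion_weight_def by simp

lemma inversion_weight_Un:
  "finite A \<Longrightarrow> finite B \<Longrightarrow> A \<inter> B = {} \<Longrightarrow>
    inversion_weight q (A \<union> B) = inversion_weight q A * inversion_weight q B"
  unfolding inversion_weight_def by (rule prod.union_disjoint)

lemma eps_conv_inversion_weight:
  assumes "distinct R"
  shows "eps q R = inversion_weight q (ordered_pairs R)"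
proof -
  let ?P = "{(s,t). s < t \<and> t < length R}"
  let ?h = "\<lambda>(s,t). (R!s, R!t)"
  have fin: "finite ?P" by (rule finite_subset[of _ "{..<length R} \<times> {..<length R}"]) auto
  have "bij_betw ?h ?P (ordered_pairs R)"
    using assms by (intro bij_betw_imageI) (auto simp: inj_on_def nth_eq_iff_index_eq ordered_pairs_def)
  then have "inversion_weight q (ordered_pairs R) =
      (\<Prod>u\<in>?P. (\<lambda>(x,y). if y < x then - q x y else 1) (?h u))"
    unfolding inversion_weight_def by (rule prod.reindex_bij_betw[symmetric])
  also have "\<dots> = (\<Prod>(s,t)\<in>?P. if R!t < R!s then - q (R!s) (R!t) else 1)"
    by (rule prod.cong) auto
  also have "\<dots> = (\<Prod>(s,t)\<in>{(s,t)\<in>?P. R!t < R!s}. - q (R!s) (R!t))"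
    by (rule prod.mono_neutral_cong_right) (use fin in \<open>auto split: if_splits\<close>)
  finally show ?thesis
    using assms unfolding eps_def by (simp add: conj_assoc)
qed

lemma eps_append:
  assumes "distinct (A @ B)"
  shows "eps q (A @ B) = eps q A * eps q B * inversion_weight q (set A \<times> set B)"
proof -
  have "(ordered_pairs A \<union> ordered_pairs B) \<inter> set A \<times> set B = {}"
    "ordered_pairs A \<inter> ordered_pairs B = {}"
    using assms ordered_pairs_subset[of A] ordered_pairs_subset[of B] by auto
  then show ?thesis
    using assms by (simp add: eps_conv_inversion_weight ordered_pairs_append inversion_weight_Un)
qed

lemma eps_sorted: "sorted_wrt (<) R \<Longrightarrow> eps q R = 1"
proof -
  assume sorted: "sorted_wrt (<) R"
  then have "\<forall>(x,y)\<in>ordered_pairs R. x \<le> y"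
    by (induction R) auto
  then show ?thesis
    using sorted by (simp add: eps_conv_inversion_weight strict_sorted_iff inversion_weight_eq_1)
qed

lemma eps_Cons: "distinct (x # R) \<Longrightarrow> eps q (x # R) = inversion_weight q ({x} \<times> set R) * eps q R"
  using eps_append[of "[x]" R q] eps_sorted[of "[x]" q] by simp

lemma eps_swap_adjacent:
  assumes "distinct (A @ a # b # B)" "a < b"
  shows "eps q (A @ b # a # B) = - q b a * eps q (A @ a # b # B)"
proof -
  define P where "P = ordered_pairs A \<union> ordered_pairs B \<union> set A \<times> set (a # b # B) \<union> {a, b} \<times> set B"
  have "ordered_pairs (A @ a # b # B) = insert (a, b) P" "ordered_pairs (A @ b # a # B) = insert (b, a) P"
    by (auto simp: P_def ordered_pairs_append)
  moreover have "(a, b) \<notin> P" "(b, a) \<notin> P" "finite P"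
    using assms(1) ordered_pairs_subset[of A] ordered_pairs_subset[of B] by (auto simp: P_def)
  ultimately show ?thesis
    using assms by (simp add: eps_conv_inversion_weight inversion_weight_insert)
qed

section \<open>Column determinants over a set of rows\<close>

definition entry_prod :: "(nat \<Rightarrow> nat \<Rightarrow> 'a::monoid_mult) \<Rightarrow> nat list \<Rightarrow> nat list \<Rightarrow> 'a" where
  "entry_prod M R L = prod_list (map (\<lambda>(i,k). M i k) (zip R L))"

lemma entry_prod_Cons [simp]: "entry_prod M (i # R) (k # L) = M i k * entry_prod M R L"
  by (simp add: entry_prod_def)

lemma entry_prod_append:
  "length R = length L \<Longrightarrow> entry_prod M (R @ R') (L @ L') = entry_prod M R L * entry_prod M R' L'"
  by (simp add: entry_prod_def zip_append)

definition cdet_set :: "(nat \<Rightarrow> nat \<Rightarrow> complex) \<Rightarrow> (nat \<Rightarrow> nat \<Rightarrow> 'a::complex_algebra_1)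
    \<Rightarrow> nat set \<Rightarrow> nat list \<Rightarrow> 'a" where
  "cdet_set q M S L = (\<Sum>R\<in>permutations_of_set S. of_cplx (eps q R) * entry_prod M R L)"

lemma bij_betw_permute_list:
  assumes "distinct xs"
  shows "bij_betw (\<lambda>\<sigma>. permute_list \<sigma> xs) {\<sigma>. \<sigma> permutes {..<length xs}} (permutations_of_set (set xs))"
proof (rule bij_betw_imageI)
  show "inj_on (\<lambda>\<sigma>. permute_list \<sigma> xs) {\<sigma>. \<sigma> permutes {..<length xs}}"
  proof (rule inj_onI, rule ext)
    fix \<sigma> \<tau> i
    assume \<sigma>: "\<sigma> \<in> {\<sigma>. \<sigma> permutes {..<length xs}}" and \<tau>: "\<tau> \<in> {\<sigma>. \<sigma> permutes {..<length xs}}"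
      and eq: "permute_list \<sigma> xs = permute_list \<tau> xs"
    show "\<sigma> i = \<tau> i"
    proof (cases "i < length xs")
      case True
      then have "xs ! \<sigma> i = xs ! \<tau> i"
        using eq \<sigma> \<tau> by (metis mem_Collect_eq permute_list_nth)
      moreover have "\<sigma> i < length xs" "\<tau> i < length xs"
        using True \<sigma> \<tau> by (metis lessThan_iff mem_Collect_eq permutes_in_image)+
      ultimately show ?thesis
        using assms by (simp add: nth_eq_iff_index_eq)
    next
      case False
      then show ?thesis using \<sigma> \<tau> by (simp add: permutes_not_in)
    qed
  qed
  show "(\<lambda>\<sigma>. permute_list \<sigma> xs) ` {\<sigma>. \<sigma> permutes {..<length xs}} = permutations_of_set (set xs)"
  proof (intro equalityI subsetI)
    fix R assume "R \<in> permutations_of_set (set xs)"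
    then have "mset R = mset xs"
      using assms by (metis permutations_of_setD set_eq_iff_mset_eq_distinct)
    then obtain \<sigma> where "\<sigma> permutes {..<length xs}" "permute_list \<sigma> xs = R"
      by (metis mset_eq_permutation)
    then show "R \<in> (\<lambda>\<sigma>. permute_list \<sigma> xs) ` {\<sigma>. \<sigma> permutes {..<length xs}}" by blast
  qed (use assms in auto)
qed

lemma eps_permute_list:
  assumes "sorted_wrt (<) J" "\<sigma> permutes {..<length J}"
  shows "eps q (permute_list \<sigma> J) = eps_perm q J \<sigma>"
proof -
  have "distinct J" using assms(1) by (simp add: strict_sorted_iff)
  moreover have "J ! \<sigma> t < J ! \<sigma> s \<longleftrightarrow> \<sigma> t < \<sigma> s" if "s < length J" "t < length J" for s t
    using that assms by (metis permutes_in_image lessThan_iff not_less_iff_gr_or_eq sorted_wrt_nth_less)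
  ultimately show ?thesis
    using assms unfolding eps_def eps_perm_def
    by (auto simp: permute_list_nth intro!: prod.cong)
qed

lemma entry_prod_permute_list:
  assumes "\<sigma> permutes {..<length R}" "length L = length R"
  shows "entry_prod M (permute_list \<sigma> R) L = prod_list (map (\<lambda>s. M (R ! \<sigma> s) (L ! s)) [0..<length L])"
  unfolding entry_prod_def using assms
  by (intro arg_cong[where f = prod_list] nth_equalityI) (auto simp: permute_list_nth)

lemma cdet_sub_eq_cdet_set:
  assumes "sorted_wrt (<) J" "length L = length J"
  shows "cdet_sub q J L M = cdet_set q M (set J) L"
proof -
  have "cdet_sub q J L M =
      (\<Sum>\<sigma>\<in>{\<sigma>. \<sigma> permutes {..<length J}}. of_cplx (eps q (permute_list \<sigma> J)) * entry_prod M (permute_list \<sigma> J) L)"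
    unfolding cdet_sub_def
  proof (intro sum.cong refl)
    fix \<sigma> assume "\<sigma> \<in> {\<sigma>. \<sigma> permutes {..<length J}}"
    then show "of_cplx (eps_perm q J \<sigma>) * prod_list (map (\<lambda>s. M (J!(\<sigma> s)) (L!s)) [0..<length L]) =
        of_cplx (eps q (permute_list \<sigma> J)) * entry_prod M (permute_list \<sigma> J) L"
      using assms by (simp add: eps_permute_list entry_prod_permute_list)
  qed
  also have "\<dots> = cdet_set q M (set J) L"
    unfolding cdet_set_def using assms(1)
    by (intro sum.reindex_bij_betw bij_betw_permute_list) (simp add: strict_sorted_iff)
  finally show ?thesis .
qed

section \<open>Column operations on Manin matrices\<close>

definition minor2 :: "(nat \<Rightarrow> nat \<Rightarrow> complex) \<Rightarrow> (nat \<Rightarrow> nat \<Rightarrow> 'a::complex_algebra_1)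
    \<Rightarrow> nat \<Rightarrow> nat \<Rightarrow> nat \<Rightarrow> nat \<Rightarrow> 'a" where
  "minor2 q M a b k l = M a k * M b l - of_cplx (q b a) * (M b k * M a l)"

lemma minor2_same_col:
  assumes "manin n m q p M" "1 \<le> a" "a < b" "b \<le> n" "k \<in> {1..m}"
  shows "minor2 q M a b k k = 0"
  using assms unfolding manin_def minor2_def by auto

lemma minor2_swap_cols_less:
  assumes "manin n m q p M" "1 \<le> a" "a < b" "b \<le> n" "1 \<le> k" "k < l" "l \<le> m"
  shows "minor2 q M a b k l = of_cplx (- p k l) * minor2 q M a b l k"
proof -
  have "M a k * M b l - of_cplx (q b a * p k l) * (M b l * M a k)
          + of_cplx (p k l) * (M a l * M b k) - of_cplx (q b a) * (M b k * M a l) = 0"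
    using assms unfolding manin_def by blast
  moreover have "of_cplx (q b a * p k l) * x = of_cplx (p k l) * (of_cplx (q b a) * x)" for x :: 'a
    by (simp only: mult.commute[of "q b a"] of_cplx_mult mult.assoc)
  ultimately show ?thesis
    unfolding minor2_def by (simp add: algebra_simps)
qed

lemma minor2_swap_cols:
  assumes "manin n m q p M" "param_matrix m p" "1 \<le> a" "a < b" "b \<le> n"
    "k \<in> {1..m}" "l \<in> {1..m}" "k \<noteq> l"
  shows "minor2 q M a b k l = of_cplx (- p k l) * minor2 q M a b l k"
proof (cases "k < l")
  case True
  then show ?thesis using minor2_swap_cols_less[OF assms(1,3-5)] assms(6,7) by simp
next
  case False
  then have "minor2 q M a b l k = of_cplx (- p l k) * minor2 q M a b k l"
    using minor2_swap_cols_less[OF assms(1,3-5)] assms(6-8) by simp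
  moreover have "p k l * p l k = 1"
    using assms(2,6,7) unfolding param_matrix_def by blast
  ultimately show ?thesis
    by (simp flip: mult.assoc of_cplx_mult)
qed

definition swap_adjacent :: "nat \<Rightarrow> 'a list \<Rightarrow> 'a list" where
  "swap_adjacent s R = R[s := R ! Suc s, Suc s := R ! s]"

lemma swap_adjacent_append [simp]:
  "length X = s \<Longrightarrow> swap_adjacent s (X @ a # b # Y) = X @ b # a # Y"
  by (simp add: swap_adjacent_def list_update_append nth_append)

lemma sum_permutations_of_set_adjacent_pairs:
  fixes g :: "'a::linorder list \<Rightarrow> 'b::comm_monoid_add"
  assumes "Suc s < card S"
  shows "(\<Sum>R\<in>permutations_of_set S. g R) =
    (\<Sum>R\<in>{R\<in>permutations_of_set S. R!s < R!Suc s}. g R + g (swap_adjacent s R))"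
proof -
  let ?A = "{R\<in>permutations_of_set S. R!s < R!Suc s}"
  let ?B = "{R\<in>permutations_of_set S. R!Suc s < R!s}"
  have swap: "swap_adjacent s R \<in> permutations_of_set S" "swap_adjacent s (swap_adjacent s R) = R"
    "swap_adjacent s R ! s = R ! Suc s" "swap_adjacent s R ! Suc s = R ! s" "R ! s \<noteq> R ! Suc s"
    if "R \<in> permutations_of_set S" for R
  proof -
    have "Suc s < length R" "distinct R"
      using that assms by (auto simp: length_finite_permutations_of_set dest: permutations_of_setD)
    then show "swap_adjacent s R \<in> permutations_of_set S" "swap_adjacent s (swap_adjacent s R) = R"
      "swap_adjacent s R ! s = R ! Suc s" "swap_adjacent s R ! Suc s = R ! s" "R ! s \<noteq> R ! Suc s"
      using that by (auto simp: swap_adjacent_def nth_list_update nth_eq_iff_index_eq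
          list_eq_iff_nth_eq permutations_of_set_def)
  qed
  have "(\<Sum>R\<in>permutations_of_set S. g R) = (\<Sum>R\<in>?A \<union> ?B. g R)"
    using swap(5) by (intro sum.cong) (auto simp: neq_iff)
  also have "\<dots> = sum g ?A + sum g ?B"
    by (rule sum.union_disjoint) auto
  also have "sum g ?B = (\<Sum>R\<in>?A. g (swap_adjacent s R))"
    by (rule sum.reindex_bij_witness[of _ "swap_adjacent s" "swap_adjacent s"]) (auto simp: swap)
  finally show ?thesis
    by (simp add: sum.distrib)
qed

lemma adjacent_row_swap_terms:
  assumes "distinct (X @ a # b # Y)" "a < b" "length X = length A"
  shows "of_cplx (eps q (X @ a # b # Y)) * entry_prod M (X @ a # b # Y) (A @ k # l # B)
      + of_cplx (eps q (X @ b # a # Y)) * entry_prod M (X @ b # a # Y) (A @ k # l # B)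
    = of_cplx (eps q (X @ a # b # Y)) * (entry_prod M X A * (minor2 q M a b k l * entry_prod M Y B))"
proof -
  have "eps q (X @ b # a # Y) = - q b a * eps q (X @ a # b # Y)"
    using assms(1,2) by (rule eps_swap_adjacent)
  then show ?thesis
    using assms(3) unfolding minor2_def
    by (simp add: entry_prod_append of_cplx_pair_combine[symmetric])
qed

lemma cdet_set_conv_minor2:
  assumes "length A = s" "length (A @ k # l # B) = card S"
  shows "cdet_set q M S (A @ k # l # B) =
    (\<Sum>R\<in>{R\<in>permutations_of_set S. R!s < R!Suc s}. of_cplx (eps q R) *
      (entry_prod M (take s R) A * (minor2 q M (R!s) (R!Suc s) k l * entry_prod M (drop (Suc (Suc s)) R) B)))"
proof -
  let ?g = "\<lambda>R. of_cplx (eps q R) * entry_prod M R (A @ k # l # B)"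
  have "Suc s < card S" using assms by simp
  then have "cdet_set q M S (A @ k # l # B) =
      (\<Sum>R\<in>{R\<in>permutations_of_set S. R!s < R!Suc s}. ?g R + ?g (swap_adjacent s R))"
    unfolding cdet_set_def by (rule sum_permutations_of_set_adjacent_pairs)
  also have "\<dots> = (\<Sum>R\<in>{R\<in>permutations_of_set S. R!s < R!Suc s}. of_cplx (eps q R) *
      (entry_prod M (take s R) A * (minor2 q M (R!s) (R!Suc s) k l * entry_prod M (drop (Suc (Suc s)) R) B)))"
  proof (rule sum.cong[OF refl])
    fix R assume R: "R \<in> {R\<in>permutations_of_set S. R!s < R!Suc s}"
    then have "distinct R" "length R = card S"
      by (auto simp: length_finite_permutations_of_set dest: permutations_of_setD)
    obtain X a b Y where R_eq: "R = X @ a # b # Y" and "length X = s"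
    proof
      show "R = take s R @ R!s # R!Suc s # drop (Suc (Suc s)) R"
        using \<open>length R = card S\<close> \<open>Suc s < card S\<close> by (simp add: Cons_nth_drop_Suc)
    qed (use \<open>length R = card S\<close> \<open>Suc s < card S\<close> in simp)
    then show "?g R + ?g (swap_adjacent s R) = of_cplx (eps q R) *
        (entry_prod M (take s R) A * (minor2 q M (R!s) (R!Suc s) k l * entry_prod M (drop (Suc (Suc s)) R) B))"
      using R \<open>distinct R\<close> assms(1) adjacent_row_swap_terms[of X a b Y A q M k l B]
      by (simp add: nth_append)
  qed
  finally show ?thesis .
qed

lemma nth_permutations_of_set_mem:
  "R \<in> permutations_of_set S \<Longrightarrow> i < card S \<Longrightarrow> R ! i \<in> S"
  by (metis length_finite_permutations_of_set nth_mem permutations_of_setD(1))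

lemma cdet_set_adjacent_equal_cols:
  assumes "manin n m q p M" "S \<subseteq> {1..n}" "length (A @ k # k # B) = card S" "k \<in> {1..m}"
  shows "cdet_set q M S (A @ k # k # B) = 0"
proof -
  have "minor2 q M (R ! length A) (R ! Suc (length A)) k k = 0"
    if "R \<in> permutations_of_set S" "R ! length A < R ! Suc (length A)" for R
    using that assms nth_permutations_of_set_mem[OF that(1), of "length A"]
      nth_permutations_of_set_mem[OF that(1), of "Suc (length A)"]
    by (intro minor2_same_col[OF assms(1)]) auto
  then show ?thesis
    using assms(3) by (simp add: cdet_set_conv_minor2)
qed

lemma cdet_set_swap_adjacent_cols:
  assumes "manin n m q p M" "param_matrix m p" "S \<subseteq> {1..n}" "length (A @ k # l # B) = card S"
    "k \<in> {1..m}" "l \<in> {1..m}" "k \<noteq> l"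
  shows "cdet_set q M S (A @ k # l # B) = of_cplx (- p k l) * cdet_set q M S (A @ l # k # B)"
proof -
  let ?s = "length A"
  let ?P = "{R\<in>permutations_of_set S. R!?s < R!Suc ?s}"
  let ?term = "\<lambda>k l R. of_cplx (eps q R) *
      (entry_prod M (take ?s R) A * (minor2 q M (R!?s) (R!Suc ?s) k l * entry_prod M (drop (Suc (Suc ?s)) R) B))"
  have "?term k l R = of_cplx (- p k l) * ?term l k R" if R: "R \<in> ?P" for R
  proof -
    have "R ! ?s \<in> S" "R ! Suc ?s \<in> S"
      using R assms(4) by (simp_all add: nth_permutations_of_set_mem)
    then have "1 \<le> R ! ?s" "R ! Suc ?s \<le> n"
      using assms(3) by auto
    then have "minor2 q M (R!?s) (R!Suc ?s) k l = of_cplx (- p k l) * minor2 q M (R!?s) (R!Suc ?s) l k"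
      using R minor2_swap_cols[OF assms(1,2) _ _ _ assms(5-7)] by simp
    then show ?thesis
      by (simp only: mult.assoc mult_of_cplx_left_commute[of "entry_prod M (take ?s R) A"]
          mult_of_cplx_left_commute[of "of_cplx (eps q R)"])
  qed
  then have "(\<Sum>R\<in>?P. ?term k l R) = of_cplx (- p k l) * (\<Sum>R\<in>?P. ?term l k R)"
    by (simp add: sum_distrib_left)
  then show ?thesis
    using assms(4) by (simp only: cdet_set_conv_minor2[OF refl] length_append length_Cons)
qed

lemma cdet_set_two_equal_cols:
  assumes "manin n m q p M" "param_matrix m p" "S \<subseteq> {1..n}"
  shows "set (A @ x # B @ x # C) \<subseteq> {1..m} \<Longrightarrow> length (A @ x # B @ x # C) = card S \<Longrightarrow>
    cdet_set q M S (A @ x # B @ x # C) = 0"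
proof (induction B arbitrary: A)
  case Nil
  then show ?case using cdet_set_adjacent_equal_cols[OF assms(1,3)] by simp
next
  case (Cons b B)
  show ?case
  proof (cases "b = x")
    case True
    then show ?thesis using Cons.prems cdet_set_adjacent_equal_cols[OF assms(1,3)] by simp
  next
    case False
    have "cdet_set q M S ((A @ [b]) @ x # B @ x # C) = 0"
      using Cons.prems by (intro Cons.IH) auto
    then show ?thesis
      using Cons.prems False cdet_set_swap_adjacent_cols[OF assms, of A x b "B @ x # C"] by simp
  qed
qed

lemma cdet_set_repeated_col:
  assumes "manin n m q p M" "param_matrix m p" "S \<subseteq> {1..n}"
    "\<not> distinct L" "set L \<subseteq> {1..m}" "length L = card S"
  shows "cdet_set q M S L = 0"
proof -
  obtain A x B C where "L = A @ [x] @ B @ [x] @ C"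
    using not_distinct_decomp[OF assms(4)] by blast
  then show ?thesis
    using cdet_set_two_equal_cols[OF assms(1-3), of A x B C] assms(5,6) by simp
qed

lemma cdet_set_insort_col:
  assumes "manin n m q p M" "param_matrix m p" "S \<subseteq> {1..n}"
  shows "sorted_wrt (<) Y \<Longrightarrow> x \<notin> set Y \<Longrightarrow> set (A @ x # Y) \<subseteq> {1..m} \<Longrightarrow>
    length (A @ x # Y) = card S \<Longrightarrow>
    cdet_set q M S (A @ x # Y) = of_cplx (inversion_weight p ({x} \<times> set Y)) * cdet_set q M S (A @ insort x Y)"
proof (induction Y arbitrary: A)
  case Nil
  then show ?case by (simp add: inversion_weight_def)
next
  case (Cons y Y)
  show ?case
  proof (cases "x < y")
    case True
    then have "inversion_weight p ({x} \<times> set (y # Y)) = 1"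
      using Cons.prems(1) by (intro inversion_weight_eq_1) auto
    then show ?thesis using True by simp
  next
    case False
    then have "y < x" "y \<notin> set Y" using Cons.prems(1,2) by auto
    have "inversion_weight p ({x} \<times> set (y # Y)) = - p x y * inversion_weight p ({x} \<times> set Y)"
      using \<open>y < x\<close> \<open>y \<notin> set Y\<close> inversion_weight_insert[of "{x} \<times> set Y" x y p] by simp
    moreover have "cdet_set q M S ((A @ [y]) @ x # Y) =
        of_cplx (inversion_weight p ({x} \<times> set Y)) * cdet_set q M S ((A @ [y]) @ insort x Y)"
      using Cons.prems by (intro Cons.IH) auto
    ultimately show ?thesis
      using Cons.prems \<open>y < x\<close> cdet_set_swap_adjacent_cols[OF assms, of A x y Y]
      by (simp add: of_cplx_mult mult.assoc)
  qed
qed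

lemma cdet_set_sort_cols:
  assumes "manin n m q p M" "param_matrix m p" "S \<subseteq> {1..n}"
  shows "distinct L \<Longrightarrow> set (A @ L) \<subseteq> {1..m} \<Longrightarrow> length (A @ L) = card S \<Longrightarrow>
    cdet_set q M S (A @ L) = of_cplx (eps p L) * cdet_set q M S (A @ sort L)"
proof (induction L arbitrary: A)
  case Nil
  then show ?case by (simp add: eps_def)
next
  case (Cons x L)
  have "cdet_set q M S ((A @ [x]) @ L) = of_cplx (eps p L) * cdet_set q M S ((A @ [x]) @ sort L)"
    using Cons.prems by (intro Cons.IH) auto
  moreover have "cdet_set q M S (A @ x # sort L) =
      of_cplx (inversion_weight p ({x} \<times> set L)) * cdet_set q M S (A @ insort x (sort L))"
    using Cons.prems by (subst cdet_set_insort_col[OF assms]) (auto simp: strict_sorted_iff)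
  ultimately show ?case
    using Cons.prems(1) by (simp add: eps_Cons mult.commute flip: mult.assoc of_cplx_mult)
qed

lemma cdet_conv_cdet_set: "cdet n q M = cdet_set q M {1..n} [1..<n+1]"
proof -
  have "set [1..<n+1] = {1..n}" by auto
  then show ?thesis
    unfolding cdet_def by (metis cdet_sub_eq_cdet_set sorted_wrt_upt)
qed

lemma cdet_set_permute_cols:
  assumes "manin n n q p M" "param_matrix n p" "set L \<subseteq> {1..n}" "length L = n"
  shows "cdet_set q M {1..n} L = of_cplx (eps p L) * cdet n q M"
proof (cases "distinct L")
  case True
  then have "card (set L) = card {1..n}"
    using assms(4) by (simp add: distinct_card)
  then have "set L = {1..n}"
    using assms(3) by (intro card_subset_eq) auto
  then have "sort L = [1..<n+1]"
    using True by (intro sorted_distinct_set_unique) (simp_all add: atLeastLessThanSuc_atLeastAtMost del: upt_Suc)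
  then show ?thesis
    using cdet_set_sort_cols[OF assms(1,2) order_refl, of L "[]"] True assms(3,4)
    by (simp add: cdet_conv_cdet_set del: upt_Suc)
next
  case False
  then show ?thesis
    using cdet_set_repeated_col[OF assms(1,2) order_refl False assms(3)] assms(4)
    by (simp add: eps_def)
qed

section \<open>Laplace splitting of the rows\<close>

lemma sum_permutations_of_set_split:
  assumes "finite S" "r \<le> card S"
  shows "(\<Sum>R\<in>permutations_of_set S. f R) =
    (\<Sum>X\<in>{X. X \<subseteq> S \<and> card X = r}. \<Sum>R1\<in>permutations_of_set X. \<Sum>R2\<in>permutations_of_set (S - X). f (R1 @ R2))"
proof -
  have "(\<Sum>R\<in>permutations_of_set S. f R) =
      (\<Sum>X\<in>{X. X \<subseteq> S \<and> card X = r}. \<Sum>R\<in>{R\<in>permutations_of_set S. set (take r R) = X}. f R)"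
  proof (rule sum.group[symmetric])
    show "(\<lambda>R. set (take r R)) ` permutations_of_set S \<subseteq> {X. X \<subseteq> S \<and> card X = r}"
    proof (intro image_subsetI CollectI conjI)
      fix R assume R: "R \<in> permutations_of_set S"
      then show "set (take r R) \<subseteq> S"
        by (metis permutations_of_setD(1) set_take_subset)
      show "card (set (take r R)) = r"
        using R assms(2) by (simp add: distinct_card length_finite_permutations_of_set permutations_of_setD(2))
    qed
  qed (use assms in auto)
  also have "\<dots> = (\<Sum>X\<in>{X. X \<subseteq> S \<and> card X = r}. \<Sum>R1\<in>permutations_of_set X. \<Sum>R2\<in>permutations_of_set (S - X). f (R1 @ R2))"
  proof (rule sum.cong[OF refl])
    fix X assume X: "X \<in> {X. X \<subseteq> S \<and> card X = r}"
    have "(\<Sum>(R1, R2)\<in>permutations_of_set X \<times> permutations_of_set (S - X). f (R1 @ R2)) =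
        (\<Sum>R\<in>{R\<in>permutations_of_set S. set (take r R) = X}. f R)"
    proof (rule sum.reindex_bij_witness[of _ "\<lambda>R. (take r R, drop r R)" "\<lambda>(R1, R2). R1 @ R2"])
      fix R assume R: "R \<in> {R\<in>permutations_of_set S. set (take r R) = X}"
      then have "set R = S" "distinct R" "set (take r R) = X"
        by (auto dest: permutations_of_setD)
      moreover have "set R = set (take r R) \<union> set (drop r R)"
        by (metis append_take_drop_id set_append)
      ultimately have "set (drop r R) = S - X"
        using set_take_disj_set_drop_if_distinct[of R r] by blast
      then show "(take r R, drop r R) \<in> permutations_of_set X \<times> permutations_of_set (S - X)"
        using R by (auto simp: permutations_of_set_def)
    next
      fix R12 assume "R12 \<in> permutations_of_set X \<times> permutations_of_set (S - X)"
      then obtain R1 R2 where "R12 = (R1, R2)" "set R1 = X" "distinct R1" "set R2 = S - X" "distinct R2"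
        by (auto simp: permutations_of_set_def)
      then show "(case R12 of (R1, R2) \<Rightarrow> R1 @ R2) \<in> {R\<in>permutations_of_set S. set (take r R) = X}"
        "(\<lambda>R. (take r R, drop r R)) (case R12 of (R1, R2) \<Rightarrow> R1 @ R2) = R12"
        using X by (auto simp: permutations_of_set_def distinct_card)
    qed auto
    then show "(\<Sum>R\<in>{R\<in>permutations_of_set S. set (take r R) = X}. f R) =
        (\<Sum>R1\<in>permutations_of_set X. \<Sum>R2\<in>permutations_of_set (S - X). f (R1 @ R2))"
      by (simp add: sum.cartesian_product)
  qed
  finally show ?thesis .
qed

lemma cdet_set_append_cols:
  assumes "finite S" "length L1 + length L2 = card S"
  shows "cdet_set q M S (L1 @ L2) =
    (\<Sum>X\<in>{X. X \<subseteq> S \<and> card X = length L1}.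
      of_cplx (inversion_weight q (X \<times> (S - X))) * cdet_set q M X L1 * cdet_set q M (S - X) L2)"
proof -
  have "cdet_set q M S (L1 @ L2) = (\<Sum>X\<in>{X. X \<subseteq> S \<and> card X = length L1}.
      \<Sum>R1\<in>permutations_of_set X. \<Sum>R2\<in>permutations_of_set (S - X).
        of_cplx (eps q (R1 @ R2)) * entry_prod M (R1 @ R2) (L1 @ L2))"
    unfolding cdet_set_def using assms by (intro sum_permutations_of_set_split) auto
  also have "\<dots> = (\<Sum>X\<in>{X. X \<subseteq> S \<and> card X = length L1}.
      \<Sum>R1\<in>permutations_of_set X. \<Sum>R2\<in>permutations_of_set (S - X).
        of_cplx (inversion_weight q (X \<times> (S - X))) * (of_cplx (eps q R1) * entry_prod M R1 L1)
          * (of_cplx (eps q R2) * entry_prod M R2 L2))"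
  proof (intro sum.cong refl)
    fix X R1 R2
    assume X: "X \<in> {X. X \<subseteq> S \<and> card X = length L1}"
      and R1: "R1 \<in> permutations_of_set X" and R2: "R2 \<in> permutations_of_set (S - X)"
    then have "distinct (R1 @ R2)" "length R1 = length L1"
      by (auto simp: length_finite_permutations_of_set dest: permutations_of_setD)
    moreover have "set R1 = X" "set R2 = S - X"
      using R1 R2 by (auto dest: permutations_of_setD)
    ultimately show "of_cplx (eps q (R1 @ R2)) * entry_prod M (R1 @ R2) (L1 @ L2) =
        of_cplx (inversion_weight q (X \<times> (S - X))) * (of_cplx (eps q R1) * entry_prod M R1 L1)
          * (of_cplx (eps q R2) * entry_prod M R2 L2)"
      unfolding of_cplx_mult_mult by (simp add: eps_append entry_prod_append mult_ac)
  qed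
  also have "\<dots> = (\<Sum>X\<in>{X. X \<subseteq> S \<and> card X = length L1}.
      of_cplx (inversion_weight q (X \<times> (S - X))) * cdet_set q M X L1 * cdet_set q M (S - X) L2)"
    by (simp only: cdet_set_def sum_distrib_left[where r = "of_cplx _"] sum_product)
  finally show ?thesis .
qed

lemma set_compl_idx [simp]: "set (compl_idx n J) = {1..n} - set J"
  unfolding compl_idx_def by auto

lemma sorted_compl_idx: "sorted_wrt (<) (compl_idx n J)"
  unfolding compl_idx_def by (intro sorted_wrt_filter sorted_wrt_upt)

lemma length_compl_idx:
  assumes "J \<in> incr_idx n r"
  shows "length (compl_idx n J) = n - r"
proof -
  have "distinct J" "set J \<subseteq> {1..n}" "length J = r"
    using assms by (auto simp: incr_idx_def strict_sorted_iff)
  then show ?thesis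
    using sorted_compl_idx[of n J]
    by (simp add: strict_sorted_iff distinct_card[symmetric] card_Diff_subset)
qed

lemma bij_betw_set_incr_idx: "bij_betw set (incr_idx n r) {X. X \<subseteq> {1..n} \<and> card X = r}"
proof (rule bij_betw_imageI)
  show "inj_on set (incr_idx n r)"
    by (rule inj_onI) (auto simp: incr_idx_def strict_sorted_equal)
  show "set ` incr_idx n r = {X. X \<subseteq> {1..n} \<and> card X = r}"
  proof (intro equalityI subsetI)
    fix X assume X: "X \<in> {X. X \<subseteq> {1..n} \<and> card X = r}"
    then have "finite X"
      using finite_subset by blast
    then have "sorted_list_of_set X \<in> incr_idx n r" "X = set (sorted_list_of_set X)"
      using X by (simp_all add: incr_idx_def)
    then show "X \<in> set ` incr_idx n r" by blast
  qed (auto simp: incr_idx_def strict_sorted_iff distinct_card)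
qed

lemma cdet_set_append_cols_incr_idx:
  assumes "r \<le> n" "length L1 = r" "length L2 = n - r"
  shows "cdet_set q M {1..n} (L1 @ L2) =
    (\<Sum>J\<in>incr_idx n r. of_cplx (eps q (J @ compl_idx n J)) *
      cdet_sub q J L1 M * cdet_sub q (compl_idx n J) L2 M)"
proof -
  let ?g = "\<lambda>X. of_cplx (inversion_weight q (X \<times> ({1..n} - X))) *
      cdet_set q M X L1 * cdet_set q M ({1..n} - X) L2"
  have "cdet_set q M {1..n} (L1 @ L2) = (\<Sum>X\<in>{X. X \<subseteq> {1..n} \<and> card X = r}. ?g X)"
    using assms by (simp add: cdet_set_append_cols)
  also have "\<dots> = (\<Sum>J\<in>incr_idx n r. ?g (set J))"
    by (rule sum.reindex_bij_betw[OF bij_betw_set_incr_idx, symmetric])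
  also have "\<dots> = (\<Sum>J\<in>incr_idx n r. of_cplx (eps q (J @ compl_idx n J)) *
      cdet_sub q J L1 M * cdet_sub q (compl_idx n J) L2 M)"
  proof (rule sum.cong[OF refl])
    fix J assume J: "J \<in> incr_idx n r"
    then have "sorted_wrt (<) J" "length J = r"
      by (auto simp: incr_idx_def)
    moreover have "eps q (J @ compl_idx n J) = inversion_weight q (set J \<times> ({1..n} - set J))"
      using \<open>sorted_wrt (<) J\<close> sorted_compl_idx[of n J]
      by (simp add: eps_append eps_sorted strict_sorted_iff)
    ultimately show "?g (set J) = of_cplx (eps q (J @ compl_idx n J)) *
        cdet_sub q J L1 M * cdet_sub q (compl_idx n J) L2 M"
      using assms length_compl_idx[OF J] sorted_compl_idx[of n J]
      by (simp add: cdet_sub_eq_cdet_set)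
  qed
  finally show ?thesis .
qed

theorem mainTheorem2:
  fixes n r :: nat
    and q p :: "nat \<Rightarrow> nat \<Rightarrow> complex"
    and M :: "nat \<Rightarrow> nat \<Rightarrow> 'a::complex_algebra_1"
    and I K :: "nat list"
  assumes "param_matrix n q" and "param_matrix n p"
    and "manin n n q p M"
    and "r \<le> n"
    and "length I = r" and "distinct I" and "set I \<subseteq> {1..n}"
    and "length K = n - r" and "distinct K" and "set K \<subseteq> {1..n}"
  shows "of_cplx (eps p (I @ K)) * cdet n q M =
    (\<Sum>J\<in>incr_idx n r. of_cplx (eps q (J @ compl_idx n J)) *
        cdet_sub q J I M * cdet_sub q (compl_idx n J) K M)"
proof -
  have "of_cplx (eps p (I @ K)) * cdet n q M = cdet_set q M {1..n} (I @ K)"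
    using assms by (intro cdet_set_permute_cols[symmetric]) auto
  also have "\<dots> = (\<Sum>J\<in>incr_idx n r. of_cplx (eps q (J @ compl_idx n J)) *
      cdet_sub q J I M * cdet_sub q (compl_idx n J) K M)"
    using assms(4,5,8) by (rule cdet_set_append_cols_incr_idx)
  finally show ?thesis .
qed

end
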